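(* Let $n\geq 3$ and let $S_n$ be the star graph with vertices $a_1,\dots,a_n$ and center $a_1$. For every $p\in(1,2]$, $$\|M_{S_n}\|_p=\left(\sup_{x\in[0,1)}\frac{1+(n-1)\left(\frac{x+1}{2}\right)^p}{1+(n-1)x^p}\right)^{1/p}.$$
   Context: For a finite connected graph $G=(V,E)$ with graph distance $d_G$ and $f:V\to\mathbb{R}$, the centered Hardy–Littlewood maximal function is $M_Gf(v)=\sup_{r\geq 0}\frac{1}{|B(v,r)|}\sum_{u\in B(v,r)}|f(u)|$, where $B(v,r)=\{u\in V: d_G(u,v)\le r\}$ and $|\cdot|$ is cardinality. For $g:V\to\mathbb{R}$, $\|g\|_p=(\sum_{v\in V}|g(v)|^p)^{1/p}$, and $\|M_G\|_p=\sup_{f\neq 0}\|M_Gf\|_p/\|f\|_p$. The star graph $S_n$ has vertices $a_1,\dots,a_n$ and edges exactly between $a_1$ and each $a_i$, $i\ge 2$. *)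

theory Defs
  imports "HOL-Analysis.Analysis"
begin

text \<open>A finite graph is given by a vertex set V and a symmetric, irreflexive
adjacency relation E.  A walk is a nonempty list of vertices of V with consecutive
vertices adjacent.\<close>

definition is_walk :: "'a set \<Rightarrow> ('a \<Rightarrow> 'a \<Rightarrow> bool) \<Rightarrow> 'a list \<Rightarrow> bool" where
  "is_walk V E xs \<longleftrightarrow> xs \<noteq> [] \<and> set xs \<subseteq> V \<and>
     (\<forall>i. Suc i < length xs \<longrightarrow> E (xs ! i) (xs ! Suc i))"

definition graph_dist :: "'a set \<Rightarrow> ('a \<Rightarrow> 'a \<Rightarrow> bool) \<Rightarrow> 'a \<Rightarrow> 'a \<Rightarrow> nat" where
  "graph_dist V E u v = (LEAST k. \<exists>xs. is_walk V E xs \<and> hd xs = u \<and> last xs = v \<and> length xs = Suc k)"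

definition graph_ball :: "'a set \<Rightarrow> ('a \<Rightarrow> 'a \<Rightarrow> bool) \<Rightarrow> 'a \<Rightarrow> real \<Rightarrow> 'a set" where
  "graph_ball V E v r = {u \<in> V. real (graph_dist V E u v) \<le> r}"

definition maximal_fun :: "'a set \<Rightarrow> ('a \<Rightarrow> 'a \<Rightarrow> bool) \<Rightarrow> ('a \<Rightarrow> real) \<Rightarrow> 'a \<Rightarrow> real" where
  "maximal_fun V E f v = (SUP r \<in> {0..}. (\<Sum>u \<in> graph_ball V E v r. \<bar>f u\<bar>) / real (card (graph_ball V E v r)))"

definition pnorm :: "'a set \<Rightarrow> real \<Rightarrow> ('a \<Rightarrow> real) \<Rightarrow> real" where
  "pnorm V p g = (\<Sum>v \<in> V. \<bar>g v\<bar> powr p) powr (1 / p)"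

text \<open>Operator norm of the maximal operator on l^p(V) (functions on V; values
outside V are irrelevant).\<close>
definition maximal_op_norm :: "'a set \<Rightarrow> ('a \<Rightarrow> 'a \<Rightarrow> bool) \<Rightarrow> real \<Rightarrow> real" where
  "maximal_op_norm V E p = (SUP f \<in> {f. \<exists>v \<in> V. f v \<noteq> 0}.
      pnorm V p (maximal_fun V E f) / pnorm V p f)"

text \<open>Star graph S_n: vertices 1..n (a_i is i), center 1.\<close>
definition star_V :: "nat \<Rightarrow> nat set" where
  "star_V n = {1..n}"

definition star_E :: "nat \<Rightarrow> nat \<Rightarrow> nat \<Rightarrow> bool" where
  "star_E n i j \<longleftrightarrow> i \<in> {1..n} \<and> j \<in> {1..n} \<and> ((i = 1 \<and> j \<ge> 2) \<or> (j = 1 \<and> i \<ge> 2))"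

end

theory Submission
  imports Defs
begin

text \<open>Write \<open>a\<close> for the value of \<open>|f|\<close> at the centre, \<open>b\<^sub>i\<close> for its values at the \<open>m\<close> leaves
and \<open>A\<close> for its mean over all vertices. Balls in the star are only the singletons, the
pairs (centre, leaf) and the whole graph, so \<open>Mf = max a A\<close> at the centre and
\<open>Mf = max (max b\<^sub>i ((a + b\<^sub>i) / 2)) A\<close> at leaf \<open>i\<close>; the test functions \<open>(1, x, \<dots>, x)\<close>
realise the ratio in the theorem, and its supremum \<open>C\<close> also bounds
\<open>\<parallel>Mf\<parallel>\<^sub>p\<^sup>p / \<parallel>f\<parallel>\<^sub>p\<^sup>p\<close> for every \<open>f\<close>.

If \<open>A \<le> a\<close>, leaves above \<open>a\<close> may be lowered to \<open>a\<close>: by the tangent-line bound for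
\<open>t\<^sup>p\<close> this changes \<open>\<parallel>Mf\<parallel>\<^sub>p\<^sup>p\<close> by at most \<open>C\<close> times the change of \<open>\<parallel>f\<parallel>\<^sub>p\<^sup>p\<close>. Once all
\<open>b\<^sub>i \<le> a\<close>, a leaf whose midpoint \<open>(a + b\<^sub>i) / 2\<close> is at least \<open>A\<close> is controlled by the
defining property of \<open>C\<close> at \<open>x = b\<^sub>i / a\<close>; the leaves with midpoint below \<open>A\<close> are a minority,
the others have \<open>p\<close>-th power mean at least \<open>A\<^sup>p\<close>, and \<open>C \<ge> 1 + m / 4\<close> (as \<open>p \<le> 2\<close>) absorbs
them. If \<open>a < A\<close>, some leaf is at least \<open>A\<close> and Jensen's inequality gives
\<open>A\<^sup>p \<le> \<parallel>f\<parallel>\<^sub>p\<^sup>p / (m + 1)\<close>; this suffices for \<open>m \<ge> 3\<close>, while \<open>m = 2\<close> needs a three-point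
convexity estimate.\<close>

section \<open>Convexity of real powers\<close>

lemma convex_on_powr_nonneg:
  fixes p :: real
  assumes "1 \<le> p"
  shows "convex_on {0..} (\<lambda>x::real. x powr p)"
proof (rule convex_onI)
  fix t x y :: real
  assume t: "0 < t" "t < 1" and x: "x \<in> {0..}" and y: "y \<in> {0..}"
  have scaled: "(s * z) powr p \<le> s * z powr p" if "0 < s" "s < 1" "0 \<le> z" for s z :: real
  proof -
    have "s powr p \<le> s" using powr_le_one_le[of s p] that assms by simp
    then show ?thesis using that by (simp add: powr_mult mult_right_mono)
  qed
  show "((1 - t) *\<^sub>R x + t *\<^sub>R y) powr p \<le> (1 - t) * x powr p + t * y powr p"
  proof (cases "x = 0 \<or> y = 0")
    case True
    then show ?thesis using scaled[of t y] scaled[of "1 - t" x] t x y by auto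
  next
    case False
    then have "x \<in> {0<..}" "y \<in> {0<..}" using x y by auto
    from convex_onD[OF powr_convex[OF assms] _ _ this] t show ?thesis by simp
  qed
qed simp

lemma powr_convex_comb_le:
  fixes p w u v :: real
  assumes "1 \<le> p" "0 \<le> w" "w \<le> 1" "0 \<le> u" "0 \<le> v"
  shows "((1 - w) * u + w * v) powr p \<le> (1 - w) * u powr p + w * v powr p"
  using convex_onD[OF convex_on_powr_nonneg[OF assms(1)], of w u v] assms by simp

lemma powr_midpoint_le:
  fixes p u v :: real
  assumes "1 \<le> p" "0 \<le> u" "0 \<le> v"
  shows "((u + v) / 2) powr p \<le> (u powr p + v powr p) / 2"
  using powr_convex_comb_le[OF assms(1), of "1/2" u v] assms by (simp add: field_simps)

lemma powr_mean_le:
  fixes x :: "'a \<Rightarrow> real" and p :: real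
  assumes "1 \<le> p" "finite S" "S \<noteq> {}" "\<And>i. i \<in> S \<Longrightarrow> 0 \<le> x i"
  shows "(sum x S / card S) powr p \<le> (\<Sum>i\<in>S. x i powr p) / card S"
proof -
  have "0 < card S" using assms by (simp add: card_gt_0_iff)
  then have "(\<Sum>i\<in>S. (1 / card S) *\<^sub>R x i) powr p \<le> (\<Sum>i\<in>S. (1 / card S) * x i powr p)"
    using convex_on_sum[OF assms(2,3) convex_on_powr_nonneg[OF assms(1)], of "\<lambda>_. 1 / card S" x]
      assms by simp
  then show ?thesis by (simp add: sum_divide_distrib)
qed

lemma card_mult_powr_le_sum_powr:
  assumes "1 \<le> p" "finite T" "\<And>i. i \<in> T \<Longrightarrow> 0 \<le> b i" "0 \<le> y" "real (card T) * y \<le> sum b T"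
  shows "real (card T) * y powr p \<le> (\<Sum>i\<in>T. b i powr p)"
proof (cases "T = {}")
  case False
  then have t: "0 < real (card T)" using assms(2) by (simp add: card_gt_0_iff)
  then have "y \<le> sum b T / card T" using assms(5) by (simp add: field_simps)
  then have "y powr p \<le> (sum b T / card T) powr p" using assms(1,4) by (simp add: powr_mono2)
  also have "\<dots> \<le> (\<Sum>i\<in>T. b i powr p) / card T" using powr_mean_le assms(1-3) False by blast
  finally show ?thesis using t by (simp add: field_simps)
qed simp

lemma powr_tangent_le:
  fixes p x y :: real
  assumes "1 \<le> p" "0 < x" "0 \<le> y"
  shows "x powr p + p * x powr (p - 1) * (y - x) \<le> y powr p"
proof -
  have "((\<lambda>x. x powr p) has_field_derivative p * x powr (p - 1)) (at x within {0..})"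
    using assms by (auto intro!: derivative_eq_intros)
  from convex_on_imp_above_tangent[OF convex_on_powr_nonneg[OF assms(1)] _ _ _ this]
  have "p * x powr (p - 1) * (y - x) \<le> y powr p - x powr p"
    using assms by simp
  then show ?thesis by simp
qed

lemma quarter_le_half_powr:
  fixes p :: real
  assumes "p \<le> 2"
  shows "1 / 4 \<le> (1 / 2 :: real) powr p"
proof -
  have "(1 / 2 :: real) powr 2 \<le> (1 / 2) powr p" by (rule powr_mono') (use assms in auto)
  then show ?thesis by (simp add: powr_numeral power2_eq_square)
qed

lemma powr_three_point_le:
  fixes p a x y :: real
  assumes "1 \<le> p" "p \<le> 2" "0 \<le> a" "0 \<le> x" "0 \<le> y"
  shows "((a + x + y) / 3) powr p \<le> 2 / 3 * (1 / 2) powr p * x powr p + 2 / 3 * (a powr p + y powr p)"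
proof -
  have "2 * ((a + y) / 2) = a + y" by simp
  then have "(a + y) powr p = (2 * ((a + y) / 2)) powr p" by (simp only:)
  also have "\<dots> = 2 powr p * ((a + y) / 2) powr p" using assms by (intro powr_mult)
  also have "\<dots> \<le> 4 * ((a powr p + y powr p) / 2)"
  proof (rule mult_mono)
    show "2 powr p \<le> (4 :: real)"
      using powr_mono[OF assms(2), of 2] by (simp add: powr_numeral)
  qed (use powr_midpoint_le assms in auto)
  finally have "(a + y) powr p \<le> 2 * (a powr p + y powr p)" by simp
  moreover have "((a + x + y) / 3) powr p \<le> (1 - 1 / 3) * (x / 2) powr p + 1 / 3 * (a + y) powr p"
    using powr_convex_comb_le[of p "1 / 3" "x / 2" "a + y"] assms by (simp add: field_simps)
  moreover have "(x / 2) powr p = (1 / 2) powr p * x powr p"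
    using assms by (simp add: powr_mult[symmetric] mult.commute)
  ultimately show ?thesis by (simp add: field_simps)
qed

lemma max_powr_truncate_le:
  fixes p a A A' \<beta> :: real
  assumes "0 < p" "0 \<le> A'" "A' \<le> A" "A \<le> a" "0 \<le> \<beta>"
  shows "max (max \<beta> ((a + \<beta>) / 2)) A powr p
    \<le> max (max (min \<beta> a) ((a + min \<beta> a) / 2)) A' powr p + (\<beta> powr p - min \<beta> a powr p)
      + (if \<beta> \<le> a then A powr p - A' powr p else 0)"
proof (cases "\<beta> \<le> a")
  case True
  define X where "X = max \<beta> ((a + \<beta>) / 2)"
  have "max X A powr p \<le> max X A' powr p + (A powr p - A' powr p)"
    using assms by (cases "A \<le> X") (simp_all add: powr_mono2)
  then show ?thesis using True by (simp add: X_def)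
next
  case False
  then have "A' \<le> a" using assms by simp
  then show ?thesis using False assms by (simp add: max_def powr_mono2)
qed

text \<open>The closing estimate when all leaves lie below the centre: \<open>X\<close> is \<open>a\<^sup>p\<close>, \<open>s\<close> counts the
leaves whose midpoint lies below the mean, and \<open>W\<close> is the mean of \<open>b\<^sub>i\<^sup>p\<close> over the \<open>t\<close> others.\<close>

lemma capped_split_estimate:
  fixes X W s t C :: real
  assumes "0 \<le> X" "X / 4 \<le> W" "1 \<le> s" "s \<le> t" "1 + (s + t) / 4 \<le> C"
  shows "X + s * W + t * X / 2 + t * W / 2 \<le> C * (X + t * W)"
proof -
  define K where "K = t / 2 + t * (s + t) / 4 - s"
  have "0 \<le> t * (s + t - 2)" using assms(3,4) by simp
  then have "t / 2 \<le> t * (s + t) / 4" by (simp add: algebra_simps)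
  then have "0 \<le> K" using assms(4) by (simp add: K_def)
  from mult_right_mono[OF assms(2) this] have "X / 4 * K \<le> W * K" .
  moreover have "0 \<le> X * (t * (s + t - 2))" using assms(1,3,4) by simp
  moreover have "0 \<le> X + t * W" using assms by simp
  from mult_right_mono[OF assms(5) this]
  have "(1 + (s + t) / 4) * (X + t * W) \<le> C * (X + t * W)" .
  moreover have "(1 + (s + t) / 4) * (X + t * W) - (X + s * W + t * X / 2 + t * W / 2)
      = X * (s - t) / 4 + W * K"
    by (simp add: K_def field_simps)
  moreover have "X * (s - t) / 4 + X / 4 * K = X * (t * (s + t - 2)) / 16"
    by (simp add: K_def field_simps)
  ultimately show ?thesis by linarith
qed

section \<open>Graph distance and the maximal operator\<close>

lemma walk_length_1_hd_last:
  "is_walk V E xs \<Longrightarrow> length xs = 1 \<Longrightarrow> hd xs = last xs"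
  by (cases xs) auto

lemma walk_length_2_adjacent:
  assumes "is_walk V E xs" "length xs = 2"
  shows "E (hd xs) (last xs)"
proof -
  obtain x y where "xs = [x, y]"
    using assms(2) by (metis One_nat_def Suc_1 length_0_conv length_Suc_conv)
  then show ?thesis using assms(1) by (auto simp: is_walk_def)
qed

lemma graph_dist_self:
  assumes "v \<in> V"
  shows "graph_dist V E v v = 0"
proof -
  have "is_walk V E [v]" using assms by (simp add: is_walk_def)
  then show ?thesis unfolding graph_dist_def by (intro Least_eq_0 exI[of _ "[v]"]) simp
qed

lemma graph_dist_adjacent:
  assumes "u \<in> V" "v \<in> V" "u \<noteq> v" "E u v"
  shows "graph_dist V E u v = 1"
  unfolding graph_dist_def
proof (rule Least_equality)
  show "\<exists>xs. is_walk V E xs \<and> hd xs = u \<and> last xs = v \<and> length xs = Suc 1"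
    using assms by (intro exI[of _ "[u, v]"]) (auto simp: is_walk_def less_Suc_eq)
next
  fix k assume "\<exists>xs. is_walk V E xs \<and> hd xs = u \<and> last xs = v \<and> length xs = Suc k"
  then show "1 \<le> k" using walk_length_1_hd_last assms(3) by (cases k) force+
qed

lemma graph_dist_common_neighbour:
  assumes "u \<in> V" "w \<in> V" "v \<in> V" "u \<noteq> v" "\<not> E u v" "E u w" "E w v"
  shows "graph_dist V E u v = 2"
  unfolding graph_dist_def
proof (rule Least_equality)
  show "\<exists>xs. is_walk V E xs \<and> hd xs = u \<and> last xs = v \<and> length xs = Suc 2"
    using assms by (intro exI[of _ "[u, w, v]"]) (auto simp: is_walk_def less_Suc_eq nth_Cons')
next
  fix k assume "\<exists>xs. is_walk V E xs \<and> hd xs = u \<and> last xs = v \<and> length xs = Suc k"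
  then obtain xs where "is_walk V E xs" "hd xs = u" "last xs = v" "length xs = Suc k" by blast
  moreover have "k \<noteq> 0" using walk_length_1_hd_last calculation assms(4) by fastforce
  moreover have "k \<noteq> 1" using walk_length_2_adjacent calculation assms(5) by fastforce
  ultimately show "2 \<le> k" by linarith
qed

lemma maximal_fun_eq_Max:
  assumes "graph_ball V E v ` {0..} = Bs" "finite Bs"
  shows "maximal_fun V E f v = Max ((\<lambda>B. (\<Sum>u\<in>B. \<bar>f u\<bar>) / real (card B)) ` Bs)"
proof -
  have "maximal_fun V E f v = Sup ((\<lambda>B. (\<Sum>u\<in>B. \<bar>f u\<bar>) / real (card B)) ` Bs)"
    unfolding maximal_fun_def assms(1)[symmetric] by (simp add: image_image)
  also have "\<dots> = Max ((\<lambda>B. (\<Sum>u\<in>B. \<bar>f u\<bar>) / real (card B)) ` Bs)"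
    using assms by (intro cSup_eq_Max) auto
  finally show ?thesis .
qed

lemma maximal_op_norm_eq_SUP:
  "maximal_op_norm V E p = (SUP f\<in>{f. \<exists>v\<in>V. f v \<noteq> 0}.
    ((\<Sum>v\<in>V. \<bar>maximal_fun V E f v\<bar> powr p) / (\<Sum>v\<in>V. \<bar>f v\<bar> powr p)) powr (1 / p))"
  by (simp add: maximal_op_norm_def pnorm_def powr_divide sum_nonneg)

lemma maximal_ratio_powr_le:
  assumes "finite V" "0 < p" "\<exists>v\<in>V. f v \<noteq> 0"
    and "(\<Sum>v\<in>V. \<bar>maximal_fun V E f v\<bar> powr p) \<le> K * (\<Sum>v\<in>V. \<bar>f v\<bar> powr p)"
  shows "((\<Sum>v\<in>V. \<bar>maximal_fun V E f v\<bar> powr p) / (\<Sum>v\<in>V. \<bar>f v\<bar> powr p)) powr (1 / p)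
    \<le> K powr (1 / p)"
proof -
  have "0 < (\<Sum>v\<in>V. \<bar>f v\<bar> powr p)" using assms(1,3) by (auto intro!: sum_pos2)
  then show ?thesis using assms(2,4) by (intro powr_mono2) (auto simp: divide_le_eq sum_nonneg)
qed

lemma maximal_op_norm_eqI:
  assumes "finite V" "0 < p" "X \<noteq> {}"
    and upper: "\<And>f. (\<Sum>v\<in>V. \<bar>maximal_fun V E f v\<bar> powr p) \<le> K * (\<Sum>v\<in>V. \<bar>f v\<bar> powr p)"
    and attained: "\<And>x. x \<in> X \<Longrightarrow> \<exists>f. (\<exists>v\<in>V. f v \<noteq> 0) \<and>
      (\<Sum>v\<in>V. \<bar>maximal_fun V E f v\<bar> powr p) = g x * (\<Sum>v\<in>V. \<bar>f v\<bar> powr p)"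
    and K: "K = (SUP x\<in>X. g x)"
  shows "maximal_op_norm V E p = K powr (1 / p)"
proof -
  define F :: "('a \<Rightarrow> real) set" where "F = {f. \<exists>v\<in>V. f v \<noteq> 0}"
  define R where "R = maximal_op_norm V E p"
  have bdd: "bdd_above ((\<lambda>f. ((\<Sum>v\<in>V. \<bar>maximal_fun V E f v\<bar> powr p) / (\<Sum>v\<in>V. \<bar>f v\<bar> powr p))
      powr (1 / p)) ` F)"
    unfolding F_def using maximal_ratio_powr_le[OF assms(1,2) _ upper]
    by (intro bdd_aboveI2[where M = "K powr (1 / p)"]) auto
  have g: "0 \<le> g x \<and> g x \<le> K \<and> g x powr (1 / p) \<le> R" if x: "x \<in> X" for x
  proof -
    obtain f where f: "f \<in> F" "(\<Sum>v\<in>V. \<bar>maximal_fun V E f v\<bar> powr p) = g x * (\<Sum>v\<in>V. \<bar>f v\<bar> powr p)"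
      using attained[OF x] by (auto simp: F_def)
    moreover have "0 < (\<Sum>v\<in>V. \<bar>f v\<bar> powr p)" using f(1) assms(1) by (auto simp: F_def intro!: sum_pos2)
    ultimately have "g x = (\<Sum>v\<in>V. \<bar>maximal_fun V E f v\<bar> powr p) / (\<Sum>v\<in>V. \<bar>f v\<bar> powr p)"
      "g x \<le> K" "0 \<le> g x"
      using upper[of f] sum_nonneg[of V "\<lambda>v. \<bar>maximal_fun V E f v\<bar> powr p"]
      by (auto simp: zero_le_mult_iff)
    then show ?thesis using f(1) bdd unfolding R_def maximal_op_norm_eq_SUP F_def[symmetric]
      by (auto intro: cSUP_upper2)
  qed
  obtain x\<^sub>0 where "x\<^sub>0 \<in> X" using assms(3) by blast
  have "F \<noteq> {}" using attained[OF \<open>x\<^sub>0 \<in> X\<close>] by (auto simp: F_def)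
  then have "R \<le> K powr (1 / p)" unfolding R_def maximal_op_norm_eq_SUP F_def[symmetric]
    using maximal_ratio_powr_le[OF assms(1,2) _ upper] by (intro cSUP_least) (auto simp: F_def)
  have "K \<le> R powr p" unfolding K using assms(3)
  proof (rule cSUP_least)
    fix x assume "x \<in> X"
    then have "(g x powr (1 / p)) powr p \<le> R powr p" using g assms(2) by (intro powr_mono2) auto
    then show "g x \<le> R powr p" using g[OF \<open>x \<in> X\<close>] assms(2) by (simp add: powr_powr)
  qed
  have "0 \<le> K" "0 \<le> R" using g[OF \<open>x\<^sub>0 \<in> X\<close>] by (auto intro: order.trans[OF powr_ge_zero])
  then have "K powr (1 / p) \<le> (R powr p) powr (1 / p)"
    using \<open>K \<le> R powr p\<close> assms(2) by (intro powr_mono2) auto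
  also have "\<dots> = R" using \<open>0 \<le> R\<close> assms(2) by (simp add: powr_powr)
  finally show ?thesis using \<open>R \<le> K powr (1 / p)\<close> by (simp add: R_def)
qed

section \<open>The star graph\<close>

lemma star_dist_to_center:
  assumes "u \<in> star_V n"
  shows "graph_dist (star_V n) (star_E n) u 1 = (if u = 1 then 0 else 1)"
  using assms graph_dist_self[of 1 "star_V n" "star_E n"]
    graph_dist_adjacent[of u "star_V n" 1 "star_E n"]
  by (auto simp: star_V_def star_E_def)

lemma star_dist_to_leaf:
  assumes "u \<in> star_V n" "j \<in> {2..n}"
  shows "graph_dist (star_V n) (star_E n) u j = (if u = j then 0 else if u = 1 then 1 else 2)"
  using assms graph_dist_self[of j "star_V n" "star_E n"]
    graph_dist_adjacent[of u "star_V n" j "star_E n"]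
    graph_dist_common_neighbour[of u "star_V n" 1 j "star_E n"]
  by (auto simp: star_V_def star_E_def)

lemma star_balls_center:
  assumes "1 \<le> n"
  shows "graph_ball (star_V n) (star_E n) 1 ` {0..} = {{1}, {1..n}}"
proof -
  have ball: "graph_ball (star_V n) (star_E n) 1 r = (if r < 1 then {1} else {1..n})"
    if "0 \<le> r" for r
  proof (rule set_eqI)
    fix u
    show "u \<in> graph_ball (star_V n) (star_E n) 1 r \<longleftrightarrow> u \<in> (if r < 1 then {1} else {1..n})"
      using star_dist_to_center[of u n] that assms
      by (cases "u \<in> star_V n") (auto simp: graph_ball_def star_V_def)
  qed
  show ?thesis
  proof (intro equalityI subsetI)
    show "B \<in> {{1}, {1..n}}" if "B \<in> graph_ball (star_V n) (star_E n) 1 ` {0..}" for B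
      using that ball by auto
    show "B \<in> graph_ball (star_V n) (star_E n) 1 ` {0..}" if "B \<in> {{1}, {1..n}}" for B
      using that ball[of 0] ball[of 1] by (auto intro: image_eqI)
  qed
qed

lemma star_balls_leaf:
  assumes "j \<in> {2..n}"
  shows "graph_ball (star_V n) (star_E n) j ` {0..} = {{j}, {1, j}, {1..n}}"
proof -
  have ball: "graph_ball (star_V n) (star_E n) j r =
      (if r < 1 then {j} else if r < 2 then {1, j} else {1..n})" if "0 \<le> r" for r
  proof (rule set_eqI)
    fix u
    show "u \<in> graph_ball (star_V n) (star_E n) j r \<longleftrightarrow>
        u \<in> (if r < 1 then {j} else if r < 2 then {1, j} else {1..n})"
      using star_dist_to_leaf[of u n j] that assms
      by (cases "u \<in> star_V n") (auto simp: graph_ball_def star_V_def)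
  qed
  show ?thesis
  proof (intro equalityI subsetI)
    show "B \<in> {{j}, {1, j}, {1..n}}" if "B \<in> graph_ball (star_V n) (star_E n) j ` {0..}" for B
      using that ball by auto
    show "B \<in> graph_ball (star_V n) (star_E n) j ` {0..}" if "B \<in> {{j}, {1, j}, {1..n}}" for B
      using that ball[of 0] ball[of 1] ball[of 2] by (auto intro: image_eqI)
  qed
qed

lemma maximal_fun_star_center:
  assumes "1 \<le> n"
  shows "maximal_fun (star_V n) (star_E n) f 1 = max \<bar>f 1\<bar> ((\<Sum>u\<in>{1..n}. \<bar>f u\<bar>) / real n)"
  by (subst maximal_fun_eq_Max[OF star_balls_center[OF assms]]) simp_all

lemma maximal_fun_star_leaf:
  assumes "j \<in> {2..n}"
  shows "maximal_fun (star_V n) (star_E n) f j =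
    max (max \<bar>f j\<bar> ((\<bar>f 1\<bar> + \<bar>f j\<bar>) / 2)) ((\<Sum>u\<in>{1..n}. \<bar>f u\<bar>) / real n)"
  using assms by (subst maximal_fun_eq_Max[OF star_balls_leaf[OF assms]])
    (simp_all add: max.commute max.left_commute)

lemma sum_star_V:
  assumes "1 \<le> n"
  shows "sum g (star_V n) = g 1 + sum g {2..n}"
  using sum.atLeast_Suc_atMost[OF assms, of g] by (simp add: star_V_def numeral_2_eq_2)

section \<open>The maximal function of a star in terms of its values\<close>

definition star_mean :: "'a set \<Rightarrow> real \<Rightarrow> ('a \<Rightarrow> real) \<Rightarrow> real" where
  "star_mean L a b = (a + sum b L) / (real (card L) + 1)"

text \<open>For \<open>f \<ge> 0\<close> with value \<open>a\<close> at the centre and values \<open>b\<close> on the leaves \<open>L\<close>, this is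
\<open>\<parallel>Mf\<parallel>\<^sub>p\<^sup>p\<close>; see \<open>star_maximal_power_sum_eq\<close>.\<close>

definition star_maximal_power_sum :: "'a set \<Rightarrow> real \<Rightarrow> real \<Rightarrow> ('a \<Rightarrow> real) \<Rightarrow> real" where
  "star_maximal_power_sum L p a b = max a (star_mean L a b) powr p +
     (\<Sum>i\<in>L. max (max (b i) ((a + b i) / 2)) (star_mean L a b) powr p)"

lemma star_mean_nonneg:
  assumes "0 \<le> a" "\<And>i. i \<in> L \<Longrightarrow> 0 \<le> b i"
  shows "0 \<le> star_mean L a b"
  using assms by (simp add: star_mean_def sum_nonneg)

lemma star_mean_mono:
  assumes "\<And>i. i \<in> L \<Longrightarrow> b i \<le> b' i"
  shows "star_mean L a b \<le> star_mean L a b'"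
  unfolding star_mean_def using assms by (intro divide_right_mono add_left_mono sum_mono) auto

lemma star_maximal_power_sum_eq:
  assumes "1 \<le> n"
  shows "(\<Sum>v\<in>star_V n. \<bar>maximal_fun (star_V n) (star_E n) f v\<bar> powr p)
    = star_maximal_power_sum {2..n} p \<bar>f 1\<bar> (\<lambda>i. \<bar>f i\<bar>)"
proof -
  have mean: "(\<Sum>u\<in>{1..n}. \<bar>f u\<bar>) / real n = star_mean {2..n} \<bar>f 1\<bar> (\<lambda>i. \<bar>f i\<bar>)"
    using assms sum_star_V[OF assms, of "\<lambda>u. \<bar>f u\<bar>"]
    by (simp add: star_mean_def star_V_def of_nat_diff)
  have "0 \<le> star_mean {2..n} \<bar>f 1\<bar> (\<lambda>i. \<bar>f i\<bar>)" by (rule star_mean_nonneg) auto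
  then have "\<bar>maximal_fun (star_V n) (star_E n) f 1\<bar> = max \<bar>f 1\<bar> (star_mean {2..n} \<bar>f 1\<bar> (\<lambda>i. \<bar>f i\<bar>))"
    unfolding maximal_fun_star_center[OF assms] mean by auto
  moreover have "\<bar>maximal_fun (star_V n) (star_E n) f i\<bar>
      = max (max \<bar>f i\<bar> ((\<bar>f 1\<bar> + \<bar>f i\<bar>) / 2)) (star_mean {2..n} \<bar>f 1\<bar> (\<lambda>i. \<bar>f i\<bar>))"
    if "i \<in> {2..n}" for i
    unfolding maximal_fun_star_leaf[OF that] mean by auto
  ultimately show ?thesis unfolding sum_star_V[OF assms] star_maximal_power_sum_def by simp
qed

lemma star_mean_le:
  assumes "finite L" "\<And>i. i \<in> L \<Longrightarrow> b i \<le> a"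
  shows "star_mean L a b \<le> a"
proof -
  have "sum b L \<le> real (card L) * a" using sum_bounded_above[of L b a] assms(2) by simp
  then show ?thesis by (simp add: star_mean_def field_simps)
qed

lemma exists_leaf_ge_star_mean:
  assumes "finite L" "L \<noteq> {}" "a < star_mean L a b"
  shows "\<exists>j\<in>L. star_mean L a b \<le> b j"
proof (rule ccontr)
  assume "\<not> ?thesis"
  then have "sum b L < (\<Sum>i\<in>L. star_mean L a b)"
    using assms by (intro sum_strict_mono) auto
  then show False using assms(3) by (simp add: star_mean_def field_simps)
qed

lemma star_mean_powr_le:
  assumes "finite L" "1 \<le> p" "0 \<le> a" "\<And>i. i \<in> L \<Longrightarrow> 0 \<le> b i"
  shows "star_mean L a b powr p \<le> (a powr p + (\<Sum>i\<in>L. b i powr p)) / (real (card L) + 1)"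
proof -
  define x where "x = (\<lambda>y. case y of None \<Rightarrow> a | Some i \<Rightarrow> b i)"
  define S where "S = insert None (Some ` L)"
  have "finite S" "S \<noteq> {}" using assms(1) by (auto simp: S_def)
  moreover have "0 \<le> x y" if "y \<in> S" for y using that assms by (auto simp: S_def x_def)
  ultimately have "(sum x S / card S) powr p \<le> (\<Sum>y\<in>S. x y powr p) / card S"
    using assms(2) by (blast intro: powr_mean_le)
  moreover have "real (card S) = real (card L) + 1"
    using assms(1) by (simp add: S_def card_image)
  moreover have "sum g S = g None + (\<Sum>i\<in>L. g (Some i))" for g :: "_ \<Rightarrow> real"
    using assms(1) by (simp add: S_def sum.reindex)
  ultimately show ?thesis by (simp add: x_def star_mean_def)
qed

lemma star_leaves_below_mean:
  assumes "finite L" "1 \<le> p" "0 \<le> a" "\<And>i. i \<in> L \<Longrightarrow> 0 \<le> b i" "\<And>i. i \<in> L \<Longrightarrow> b i \<le> a"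
    and S: "S = {i \<in> L. (a + b i) / 2 < star_mean L a b}" "S \<noteq> {}"
  shows "card S \<le> card (L - S)"
    and "real (card (L - S)) * star_mean L a b powr p \<le> (\<Sum>i\<in>L - S. b i powr p)"
proof -
  define A s t where "A = star_mean L a b" and "s = real (card S)" and "t = real (card (L - S))"
  have SL: "S \<subseteq> L" "finite S" using S assms(1) by (auto intro: rev_finite_subset)
  have "A \<le> a" unfolding A_def using assms(1,5) by (rule star_mean_le)
  have "1 \<le> s" using SL S(2) by (simp add: s_def Suc_le_eq card_gt_0_iff)
  have "s + t = real (card L)"
    using card_Diff_subset[OF SL(2,1)] card_mono[OF assms(1) SL(1)] by (simp add: s_def t_def)
  moreover have "sum b L = sum b S + sum b (L - S)"
    using sum.subset_diff[OF SL(1) assms(1)] by (simp add: add.commute)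
  ultimately have mean: "(s + t + 1) * A = a + sum b S + sum b (L - S)"
    by (simp add: A_def star_mean_def add.commute)
  have "sum b S < (\<Sum>i\<in>S. 2 * A - a)"
    using S SL by (intro sum_strict_mono) (auto simp: A_def)
  then have below: "sum b S < s * (2 * A - a)" by (simp add: s_def)
  have "sum b (L - S) \<le> t * a"
    using sum_bounded_above[of "L - S" b a] assms(5) by (simp add: t_def)
  then have "0 < (t + 1 - s) * (a - A)"
    using mean below by (simp add: algebra_simps)
  then have "s < t + 1" using \<open>A \<le> a\<close> by (simp add: zero_less_mult_iff)
  then show "card S \<le> card (L - S)" by (simp add: s_def t_def)
  have "0 \<le> (s - 1) * (a - A)" using \<open>1 \<le> s\<close> \<open>A \<le> a\<close> by simp
  then have "t * A < sum b (L - S)" using mean below by (simp add: algebra_simps)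
  moreover have "0 \<le> A" unfolding A_def using assms(3,4) by (rule star_mean_nonneg)
  ultimately show "real (card (L - S)) * star_mean L a b powr p \<le> (\<Sum>i\<in>L - S. b i powr p)"
    unfolding A_def t_def using assms(1,2,4) by (intro card_mult_powr_le_sum_powr) auto
qed

lemma star_mean_powr_truncate_le:
  assumes "finite L" "1 \<le> p" "0 \<le> a" "\<And>i. i \<in> L \<Longrightarrow> 0 \<le> b i" "star_mean L a b \<le> a"
  shows "star_mean L a b powr p - star_mean L a (\<lambda>i. min (b i) a) powr p
    \<le> (\<Sum>i\<in>L. b i powr p - min (b i) a powr p) / (real (card L) + 1)"
proof -
  define A A' where "A = star_mean L a b" and "A' = star_mean L a (\<lambda>i. min (b i) a)"
  have "A - A' = (\<Sum>i\<in>L. b i - min (b i) a) / (real (card L) + 1)"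
    unfolding A_def A'_def star_mean_def sum_subtractf by (simp add: diff_divide_distrib[symmetric])
  have "A' \<le> A" unfolding A_def A'_def by (rule star_mean_mono) simp
  have "0 \<le> A'" unfolding A'_def using assms(3,4) by (intro star_mean_nonneg) auto
  have leaf: "p * a powr (p - 1) * (b i - min (b i) a) \<le> b i powr p - min (b i) a powr p"
    if "i \<in> L" for i
  proof (cases "b i \<le> a \<or> a = 0")
    case True
    then show ?thesis using assms(2,4) that by (auto simp: powr_mono2)
  next
    case False
    then show ?thesis using powr_tangent_le[of p a "b i"] assms(2,3) by simp
  qed
  show ?thesis
  proof (cases "A = 0")
    case False
    then have "0 < A" using \<open>0 \<le> A'\<close> \<open>A' \<le> A\<close> by simp
    have "A powr p - A' powr p \<le> p * A powr (p - 1) * (A - A')"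
      using powr_tangent_le[of p A A'] assms(2) \<open>0 < A\<close> \<open>0 \<le> A'\<close> by (simp add: algebra_simps)
    also have "\<dots> \<le> p * a powr (p - 1) * (A - A')"
      using assms(2,5) \<open>0 < A\<close> \<open>A' \<le> A\<close>
      by (intro mult_right_mono mult_left_mono powr_mono2) (auto simp: A_def)
    also have "\<dots> = (\<Sum>i\<in>L. p * a powr (p - 1) * (b i - min (b i) a)) / (real (card L) + 1)"
      by (simp add: \<open>A - A' = _\<close> sum_distrib_left)
    also have "\<dots> \<le> (\<Sum>i\<in>L. b i powr p - min (b i) a powr p) / (real (card L) + 1)"
      using leaf by (intro divide_right_mono sum_mono) auto
    finally show ?thesis by (simp add: A_def A'_def)
  next
    case True
    then have "A' = 0" using \<open>0 \<le> A'\<close> \<open>A' \<le> A\<close> by simp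
    moreover have "0 \<le> (\<Sum>i\<in>L. b i powr p - min (b i) a powr p)"
      using assms(2-4) by (intro sum_nonneg) (auto simp: powr_mono2)
    ultimately show ?thesis using True by (simp add: A_def A'_def)
  qed
qed

lemma star_maximal_power_sum_centre_below_mean:
  assumes "a < star_mean L a b" "\<And>i. i \<in> L \<Longrightarrow> 0 \<le> b i"
  shows "star_maximal_power_sum L p a b
    = star_mean L a b powr p + (\<Sum>i\<in>L. max (b i) (star_mean L a b) powr p)"
proof -
  have "max (max (b i) ((a + b i) / 2)) (star_mean L a b) = max (b i) (star_mean L a b)"
    if "i \<in> L" for i using assms that by (auto simp: max_def)
  then show ?thesis using assms(1) by (simp add: star_maximal_power_sum_def)
qed

lemma star_maximal_power_sum_capped:
  assumes "finite L" "\<And>i. i \<in> L \<Longrightarrow> b i \<le> a"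
    and S: "S = {i \<in> L. (a + b i) / 2 < star_mean L a b}"
  shows "star_maximal_power_sum L p a b
    = a powr p + real (card S) * star_mean L a b powr p + (\<Sum>i\<in>L - S. ((a + b i) / 2) powr p)"
proof -
  define A where "A = star_mean L a b"
  have "A \<le> a" unfolding A_def using assms(1,2) by (rule star_mean_le)
  have "max (max (b i) ((a + b i) / 2)) A powr p
      = (if i \<in> S then A powr p else ((a + b i) / 2) powr p)" if "i \<in> L" for i
    using assms(2)[OF that] that by (auto simp: S A_def max_def)
  then have "(\<Sum>i\<in>L. max (max (b i) ((a + b i) / 2)) A powr p)
      = (\<Sum>i\<in>L. if i \<in> S then A powr p else ((a + b i) / 2) powr p)"
    by (rule sum.cong[OF refl])
  also have "\<dots> = real (card S) * A powr p + (\<Sum>i\<in>L - S. ((a + b i) / 2) powr p)"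
  proof -
    have "L \<inter> S = S" "L \<inter> - S = L - S" using S by auto
    then show ?thesis using assms(1) by (simp add: sum.If_cases)
  qed
  finally show ?thesis using \<open>A \<le> a\<close> by (simp add: star_maximal_power_sum_def A_def)
qed

lemma star_maximal_power_sum_truncate_le:
  assumes "finite L" "0 < p" "0 \<le> a" "\<And>i. i \<in> L \<Longrightarrow> 0 \<le> b i" "star_mean L a b \<le> a"
    and "i\<^sub>0 \<in> L" "a < b i\<^sub>0"
  shows "star_maximal_power_sum L p a b
    \<le> star_maximal_power_sum L p a (\<lambda>i. min (b i) a) + (\<Sum>i\<in>L. b i powr p - min (b i) a powr p)
      + (real (card L) - 1) * (star_mean L a b powr p - star_mean L a (\<lambda>i. min (b i) a) powr p)"
proof -
  define A A' D where "A = star_mean L a b" and "A' = star_mean L a (\<lambda>i. min (b i) a)"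
    and "D = A powr p - A' powr p"
  have "A' \<le> A" unfolding A_def A'_def by (rule star_mean_mono) simp
  moreover have "0 \<le> A'" unfolding A'_def using assms(3,4) by (intro star_mean_nonneg) auto
  ultimately have "0 \<le> D" using assms(2) by (simp add: D_def powr_mono2)
  have "(\<Sum>i\<in>L. if b i \<le> a then D else 0) = (\<Sum>i\<in>L - {i\<^sub>0}. if b i \<le> a then D else 0)"
    using assms(1,6,7) by (simp add: sum.remove)
  also have "\<dots> \<le> real (card (L - {i\<^sub>0})) * D"
    using \<open>0 \<le> D\<close> by (intro sum_bounded_above) auto
  also have "real (card (L - {i\<^sub>0})) = real (card L) - 1"
  proof -
    have "1 \<le> card L" using assms(1,6) by (auto simp: Suc_le_eq card_gt_0_iff)
    then show ?thesis using assms(1,6) by (simp add: of_nat_diff)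
  qed
  finally have count: "(\<Sum>i\<in>L. if b i \<le> a then D else 0) \<le> (real (card L) - 1) * D" .
  have "(\<Sum>i\<in>L. max (max (b i) ((a + b i) / 2)) A powr p)
      \<le> (\<Sum>i\<in>L. max (max (min (b i) a) ((a + min (b i) a) / 2)) A' powr p
          + (b i powr p - min (b i) a powr p) + (if b i \<le> a then D else 0))"
    unfolding D_def using assms(4,5)
    by (intro sum_mono max_powr_truncate_le[OF assms(2) \<open>0 \<le> A'\<close> \<open>A' \<le> A\<close>]) (auto simp: A_def)
  moreover have "max a A = max a A'" using \<open>A' \<le> A\<close> assms(5) by (simp add: A_def)
  ultimately show ?thesis using count
    by (simp add: star_maximal_power_sum_def sum.distrib A_def A'_def D_def)
qed

lemma star_maximal_power_sum_constant_leaves: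
  assumes "finite L" "0 \<le> x" "x \<le> 1" "\<And>i. i \<in> L \<Longrightarrow> b i = x"
  shows "star_maximal_power_sum L p 1 b = 1 + real (card L) * ((x + 1) / 2) powr p"
proof -
  define m A where "m = real (card L)" and "A = star_mean L 1 b"
  have A_eq: "A = (1 + m * x) / (m + 1)" using assms(4) by (simp add: A_def m_def star_mean_def)
  also have "\<dots> \<le> (1 + m) / (m + 1)"
    using assms by (intro divide_right_mono) (auto simp: m_def mult_left_le)
  finally have "A \<le> 1" by (simp add: m_def add.commute)
  have leaf: "max (max (b i) ((1 + b i) / 2)) A powr p = ((x + 1) / 2) powr p" if "i \<in> L" for i
  proof -
    have "1 \<le> m" using that assms(1) by (auto simp: m_def Suc_le_eq card_gt_0_iff)
    then have "0 \<le> (m - 1) * (1 - x)" using assms by simp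
    then have "2 * (1 + m * x) \<le> (1 + x) * (m + 1)" by (simp add: algebra_simps)
    then have "A \<le> (1 + x) / 2" unfolding A_eq using \<open>1 \<le> m\<close> by (simp add: field_simps)
    then show ?thesis using assms(3) assms(4)[OF that] by (simp add: add.commute)
  qed
  show ?thesis using \<open>A \<le> 1\<close>
    by (simp add: star_maximal_power_sum_def A_def[symmetric] m_def leaf)
qed

section \<open>The upper bound\<close>

text \<open>The upper bound needs only that \<open>C\<close> dominates the ratio attained by the test functions
\<open>(1, x, \<dots>, x)\<close>.\<close>

locale star_bound =
  fixes L :: "'a set" and p C :: real
  assumes finite_L: "finite L" and two_le_card_L: "2 \<le> card L"
    and one_less_p: "1 < p" and p_le_2: "p \<le> 2"
    and ratio_le_C: "\<And>x. 0 \<le> x \<Longrightarrow> x < 1 \<Longrightarrow>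
      1 + real (card L) * ((x + 1) / 2) powr p \<le> C * (1 + real (card L) * x powr p)"
begin

abbreviation power_sum :: "real \<Rightarrow> ('a \<Rightarrow> real) \<Rightarrow> real" where
  "power_sum a b \<equiv> a powr p + (\<Sum>i\<in>L. b i powr p)"

lemma C_ge_half_powr: "1 + real (card L) * (1 / 2) powr p \<le> C"
  using ratio_le_C[of 0] one_less_p by simp

lemma C_ge_quarter: "1 + real (card L) / 4 \<le> C"
  using C_ge_half_powr mult_left_mono[OF quarter_le_half_powr[OF p_le_2], of "real (card L)"]
  by simp

lemma one_le_C: "1 \<le> C"
proof -
  have "0 \<le> real (card L) / 4" by simp
  then show ?thesis using C_ge_quarter by linarith
qed

lemma midpoint_powr_le:
  assumes "0 \<le> \<beta>" "\<beta> \<le> a"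
  shows "((a + \<beta>) / 2) powr p \<le> C * \<beta> powr p + (C - 1) / real (card L) * a powr p"
proof (cases "\<beta> = a")
  case True
  have "0 \<le> (C - 1) / real (card L) * a powr p" using one_le_C by simp
  then show ?thesis
    using True mult_right_mono[OF one_le_C, of "a powr p"] by simp
next
  case False
  then have "0 < a" using assms by simp
  define x where "x = \<beta> / a"
  have "0 \<le> x" "x < 1" using assms \<open>0 < a\<close> False by (auto simp: x_def)
  from ratio_le_C[OF this] two_le_card_L
  have "((x + 1) / 2) powr p \<le> C * x powr p + (C - 1) / real (card L)"
    by (simp add: field_simps)
  from mult_left_mono[OF this, of "a powr p"]
  have "a powr p * ((x + 1) / 2) powr p \<le> a powr p * (C * x powr p + (C - 1) / real (card L))"
    by simp
  moreover have "a powr p * ((x + 1) / 2) powr p = ((a + \<beta>) / 2) powr p"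
  proof -
    have "a * ((x + 1) / 2) = (a + \<beta>) / 2" using \<open>0 < a\<close> by (simp add: x_def field_simps)
    then show ?thesis using \<open>0 < a\<close> \<open>0 \<le> x\<close> by (simp add: powr_mult[symmetric])
  qed
  moreover have "a powr p * x powr p = \<beta> powr p"
    using \<open>0 < a\<close> assms(1) by (simp add: powr_mult[symmetric] x_def)
  ultimately show ?thesis by (simp add: algebra_simps)
qed

lemma bound_capped_midpoints_above_mean:
  assumes "\<And>i. i \<in> L \<Longrightarrow> 0 \<le> b i" "\<And>i. i \<in> L \<Longrightarrow> b i \<le> a"
    and "{i \<in> L. (a + b i) / 2 < star_mean L a b} = {}"
  shows "star_maximal_power_sum L p a b \<le> C * power_sum a b"
proof -
  have "star_maximal_power_sum L p a b = a powr p + (\<Sum>i\<in>L. ((a + b i) / 2) powr p)"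
    using star_maximal_power_sum_capped[OF finite_L assms(2) assms(3)[symmetric]] by simp
  also have "\<dots> \<le> a powr p + (\<Sum>i\<in>L. C * b i powr p + (C - 1) / real (card L) * a powr p)"
    using assms(1,2) by (intro add_left_mono sum_mono midpoint_powr_le) auto
  also have "\<dots> = a powr p + C * (\<Sum>i\<in>L. b i powr p) + (C - 1) * a powr p"
    using two_le_card_L by (simp add: sum.distrib sum_distrib_left)
  also have "\<dots> = C * power_sum a b" by (simp add: algebra_simps)
  finally show ?thesis .
qed

lemma bound_capped_midpoint_below_mean:
  assumes "0 \<le> a" "\<And>i. i \<in> L \<Longrightarrow> 0 \<le> b i" "\<And>i. i \<in> L \<Longrightarrow> b i \<le> a"
    and S: "S = {i \<in> L. (a + b i) / 2 < star_mean L a b}" "S \<noteq> {}"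
  shows "star_maximal_power_sum L p a b \<le> C * power_sum a b"
proof -
  define A T where "A = star_mean L a b" and "T = L - S"
  define s t where "s = real (card S)" and "t = real (card T)"
  define W where "W = (\<Sum>i\<in>T. b i powr p) / t"
  have "S \<subseteq> L" "finite S" "finite T" using S finite_L by (auto simp: T_def)
  have "1 \<le> s" using \<open>finite S\<close> S(2) by (simp add: s_def Suc_le_eq card_gt_0_iff)
  have "s + t = real (card L)"
    using card_Diff_subset[OF \<open>finite S\<close> \<open>S \<subseteq> L\<close>] card_mono[OF finite_L \<open>S \<subseteq> L\<close>]
    by (simp add: s_def t_def T_def)
  from star_leaves_below_mean[OF finite_L less_imp_le[OF one_less_p] assms(1-3) S]
  have "s \<le> t" and "t * A powr p \<le> (\<Sum>i\<in>T. b i powr p)" by (simp_all add: s_def t_def T_def A_def)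
  then have "0 < t" using \<open>1 \<le> s\<close> by simp
  then have tW: "t * W = (\<Sum>i\<in>T. b i powr p)" by (simp add: W_def)
  have "A powr p \<le> W" using \<open>t * A powr p \<le> _\<close> \<open>0 < t\<close> by (simp add: tW[symmetric])
  obtain i where "i \<in> S" using S(2) by blast
  then have "a / 2 < A" using S(1) assms(2)[of i] by (auto simp: A_def)
  have T_nonneg: "\<And>i. i \<in> T \<Longrightarrow> 0 \<le> b i" using assms(2) by (simp add: T_def)
  have "a powr p * (1 / 2) powr p = (a / 2) powr p"
    using assms(1) powr_mult[of a "1 / 2" p] by simp
  also have "\<dots> \<le> A powr p" using \<open>a / 2 < A\<close> assms(1) one_less_p by (simp add: powr_mono2)
  finally have "a powr p / 4 \<le> W"
    using \<open>A powr p \<le> W\<close> mult_left_mono[OF quarter_le_half_powr[OF p_le_2], of "a powr p"] by simp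
  have "star_maximal_power_sum L p a b
      = a powr p + s * A powr p + (\<Sum>i\<in>T. ((a + b i) / 2) powr p)"
    using star_maximal_power_sum_capped[OF finite_L assms(3) S(1)] by (simp add: s_def A_def T_def)
  also have "\<dots> \<le> a powr p + s * W + (\<Sum>i\<in>T. (a powr p + b i powr p) / 2)"
    using \<open>A powr p \<le> W\<close> \<open>1 \<le> s\<close> one_less_p assms(1) T_nonneg
    by (intro add_mono sum_mono powr_midpoint_le) auto
  also have "\<dots> = a powr p + s * W + t * a powr p / 2 + t * W / 2"
    using tW by (simp add: t_def sum.distrib add_divide_distrib sum_divide_distrib)
  also have "\<dots> \<le> C * (a powr p + t * W)"
    using \<open>a powr p / 4 \<le> W\<close> \<open>1 \<le> s\<close> \<open>s \<le> t\<close> C_ge_quarter \<open>s + t = _\<close>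
    by (intro capped_split_estimate) auto
  also have "\<dots> \<le> C * power_sum a b"
    using sum.subset_diff[OF \<open>S \<subseteq> L\<close> finite_L, of "\<lambda>i. b i powr p"] one_le_C
    by (intro mult_left_mono) (auto simp: tW T_def sum_nonneg)
  finally show ?thesis .
qed

lemma bound_capped:
  assumes "0 \<le> a" "\<And>i. i \<in> L \<Longrightarrow> 0 \<le> b i" "\<And>i. i \<in> L \<Longrightarrow> b i \<le> a"
  shows "star_maximal_power_sum L p a b \<le> C * power_sum a b"
proof (cases "{i \<in> L. (a + b i) / 2 < star_mean L a b} = {}")
  case True
  then show ?thesis using assms by (intro bound_capped_midpoints_above_mean) auto
next
  case False
  then show ?thesis using bound_capped_midpoint_below_mean[of a b, OF assms refl] by simp
qed

lemma bound_centre_above_mean: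
  assumes "0 \<le> a" "\<And>i. i \<in> L \<Longrightarrow> 0 \<le> b i" "star_mean L a b \<le> a"
  shows "star_maximal_power_sum L p a b \<le> C * power_sum a b"
proof (cases "\<forall>i\<in>L. b i \<le> a")
  case True
  then show ?thesis using bound_capped assms(1,2) by blast
next
  case False
  then obtain i\<^sub>0 where "i\<^sub>0 \<in> L" "a < b i\<^sub>0" by (auto simp: not_le)
  define b' where "b' = (\<lambda>i. min (b i) a)"
  define G where "G = (\<Sum>i\<in>L. b i powr p - b' i powr p)"
  define D where "D = star_mean L a b powr p - star_mean L a b' powr p"
  have "0 \<le> G" unfolding G_def b'_def using assms(1,2) one_less_p
    by (intro sum_nonneg) (auto simp: powr_mono2)
  have "D \<le> G / (real (card L) + 1)"
    unfolding D_def G_def b'_def using finite_L one_less_p assms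
    by (intro star_mean_powr_truncate_le) auto
  then have "(real (card L) - 1) * D \<le> (real (card L) - 1) * (G / (real (card L) + 1))"
    using two_le_card_L by (intro mult_left_mono) auto
  moreover have "(real (card L) - 1) / (real (card L) + 1) \<le> real (card L) / 4"
  proof -
    have "0 \<le> (real (card L) - 2) * (real (card L) - 1)" using two_le_card_L by simp
    then show ?thesis by (simp add: field_simps algebra_simps)
  qed
  then have "1 + (real (card L) - 1) / (real (card L) + 1) \<le> C" using C_ge_quarter by linarith
  from mult_right_mono[OF this \<open>0 \<le> G\<close>]
  have "G + (real (card L) - 1) * (G / (real (card L) + 1)) \<le> C * G" by (simp add: algebra_simps)
  moreover have "star_maximal_power_sum L p a b' \<le> C * power_sum a b'"
    using assms(1,2) by (intro bound_capped) (auto simp: b'_def)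
  moreover have "star_maximal_power_sum L p a b \<le> star_maximal_power_sum L p a b' + G + (real (card L) - 1) * D"
    unfolding b'_def G_def D_def using finite_L one_less_p assms \<open>i\<^sub>0 \<in> L\<close> \<open>a < b i\<^sub>0\<close>
    by (intro star_maximal_power_sum_truncate_le) auto
  ultimately have "star_maximal_power_sum L p a b \<le> C * power_sum a b' + C * G" by linarith
  also have "\<dots> = C * power_sum a b" by (simp add: G_def sum_subtractf algebra_simps)
  finally show ?thesis .
qed

lemma bound_centre_below_mean_3_le_card:
  assumes "3 \<le> card L" "0 \<le> a" "\<And>i. i \<in> L \<Longrightarrow> 0 \<le> b i" "a < star_mean L a b"
  shows "star_maximal_power_sum L p a b \<le> C * power_sum a b"
proof -
  define A m P where "A = star_mean L a b" and "m = real (card L)" and "P = power_sum a b"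
  have "0 \<le> P" by (simp add: P_def sum_nonneg)
  have "L \<noteq> {}" using two_le_card_L by auto
  then obtain j where "j \<in> L" "A \<le> b j"
    using exists_leaf_ge_star_mean[OF finite_L _ assms(4)] by (auto simp: A_def)
  have "(\<Sum>i\<in>L. max (b i) A powr p) = b j powr p + (\<Sum>i\<in>L - {j}. max (b i) A powr p)"
    using \<open>j \<in> L\<close> \<open>A \<le> b j\<close> finite_L by (simp add: sum.remove)
  also have "\<dots> \<le> b j powr p + (\<Sum>i\<in>L - {j}. b i powr p + A powr p)"
    by (intro add_left_mono sum_mono) (simp add: max_def)
  also have "\<dots> = (\<Sum>i\<in>L. b i powr p) + (m - 1) * A powr p"
    using \<open>j \<in> L\<close> finite_L two_le_card_L by (simp add: sum.distrib sum.remove m_def of_nat_diff)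
  finally have "star_maximal_power_sum L p a b \<le> (\<Sum>i\<in>L. b i powr p) + m * A powr p"
    using star_maximal_power_sum_centre_below_mean[OF assms(4,3)] by (simp add: A_def algebra_simps)
  also have "\<dots> \<le> P + m * (P / (m + 1))"
    using star_mean_powr_le[OF finite_L _ assms(2,3)] one_less_p
    by (intro add_mono mult_left_mono) (auto simp: A_def m_def P_def)
  also have "\<dots> \<le> (1 + m / 4) * P"
  proof -
    have "m / (m + 1) \<le> m / 4" using assms(1) by (intro divide_left_mono) (auto simp: m_def)
    from mult_right_mono[OF this \<open>0 \<le> P\<close>] show ?thesis by (simp add: algebra_simps)
  qed
  also have "\<dots> \<le> C * P"
    using C_ge_quarter \<open>0 \<le> P\<close> by (intro mult_right_mono) (auto simp: m_def)
  finally show ?thesis by (simp add: P_def)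
qed

lemma bound_centre_below_mean_card_2:
  assumes "card L = 2" "0 \<le> a" "\<And>i. i \<in> L \<Longrightarrow> 0 \<le> b i" "a < star_mean L a b"
  shows "star_maximal_power_sum L p a b \<le> C * power_sum a b"
proof -
  define A where "A = star_mean L a b"
  have "L \<noteq> {}" using assms(1) by auto
  then obtain j where "j \<in> L" "A \<le> b j"
    using exists_leaf_ge_star_mean[OF finite_L _ assms(4)] by (auto simp: A_def)
  moreover have "card (L - {j}) = 1" using assms(1) \<open>j \<in> L\<close> by simp
  then obtain k where "L - {j} = {k}" by (auto simp: card_Suc_eq)
  ultimately have L: "L = {j, k}" "k \<noteq> j" by auto
  have "3 / 2 \<le> C" "1 + 2 * (1 / 2) powr p \<le> C" using C_ge_quarter C_ge_half_powr assms(1) by simp_all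
  have "0 \<le> a powr p" "0 \<le> b j powr p" "0 \<le> b k powr p" by simp_all
  have maximal_sum: "star_maximal_power_sum L p a b = A powr p + b j powr p + max (b k) A powr p"
    using star_maximal_power_sum_centre_below_mean[OF assms(4,3)] \<open>A \<le> b j\<close> L by (simp add: A_def)
  show ?thesis
  proof (cases "A \<le> b k")
    case True
    define Q where "Q = a powr p + b j powr p + b k powr p"
    have "A powr p \<le> Q / 3"
      using star_mean_powr_le[of L p a b, OF finite_L _ assms(2,3)] one_less_p L by (simp add: A_def Q_def)
    moreover have "star_maximal_power_sum L p a b = A powr p + b j powr p + b k powr p"
      using maximal_sum True by simp
    ultimately have "star_maximal_power_sum L p a b \<le> 4 / 3 * Q"
      using \<open>0 \<le> a powr p\<close> Q_def by linarith
    also have "\<dots> \<le> C * Q" using \<open>3 / 2 \<le> C\<close> \<open>0 \<le> a powr p\<close> by (intro mult_right_mono) (auto simp: Q_def)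
    also have "Q = power_sum a b" using L by (simp add: Q_def)
    finally show ?thesis .
  next
    case False
    have "A powr p = ((a + b j + b k) / 3) powr p" using L by (simp add: A_def star_mean_def add.assoc)
    also have "\<dots> \<le> 2 / 3 * (1 / 2) powr p * b j powr p + 2 / 3 * (a powr p + b k powr p)"
      using one_less_p p_le_2 assms(2,3) L by (intro powr_three_point_le) auto
    finally have "star_maximal_power_sum L p a b
        \<le> (1 + 4 / 3 * (1 / 2) powr p) * b j powr p + 4 / 3 * (a powr p + b k powr p)"
      using maximal_sum False by (simp add: field_simps)
    also have "\<dots> \<le> C * b j powr p + C * (a powr p + b k powr p)"
    proof (intro add_mono mult_right_mono)
      have "0 \<le> (1 / 2 :: real) powr p" by simp
      then show "1 + 4 / 3 * (1 / 2) powr p \<le> C" using \<open>1 + 2 * (1 / 2) powr p \<le> C\<close> by linarith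
      show "4 / 3 \<le> C" using \<open>3 / 2 \<le> C\<close> by simp
    qed simp_all
    finally show ?thesis using L by (simp add: algebra_simps)
  qed
qed

lemma star_maximal_power_sum_le:
  assumes "0 \<le> a" "\<And>i. i \<in> L \<Longrightarrow> 0 \<le> b i"
  shows "star_maximal_power_sum L p a b \<le> C * power_sum a b"
proof (cases "star_mean L a b \<le> a")
  case False
  then show ?thesis using two_le_card_L assms
      bound_centre_below_mean_card_2 bound_centre_below_mean_3_le_card
    by (cases "card L = 2") auto
qed (use bound_centre_above_mean assms in blast)

end

section \<open>The norm of the maximal operator\<close>

lemma star_ratio_le:
  fixes m x p :: real
  assumes "0 \<le> m" "0 \<le> x" "x \<le> 1" "0 \<le> p"
  shows "(1 + m * ((x + 1) / 2) powr p) / (1 + m * x powr p) \<le> 1 + m"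
proof -
  have "1 \<le> 1 + m * x powr p" using assms by simp
  then have "(1 + m * ((x + 1) / 2) powr p) / (1 + m * x powr p) \<le> (1 + m * ((x + 1) / 2) powr p) / 1"
    using assms by (intro divide_left_mono) (auto intro: add_pos_nonneg)
  also have "\<dots> \<le> 1 + m"
    using assms powr_le1[of p "(x + 1) / 2"] by (simp add: mult_left_le)
  finally show ?thesis .
qed

lemma star_bound_Sup_ratio:
  assumes "3 \<le> n" "1 < p" "p \<le> 2"
  shows "star_bound {2..n} p
    (SUP x\<in>{0..<1::real}. (1 + real (n - 1) * ((x + 1) / 2) powr p) / (1 + real (n - 1) * x powr p))"
    (is "star_bound _ _ (SUP x\<in>_. ?ratio x)")
proof
  fix x :: real assume "0 \<le> x" "x < 1"
  have "bdd_above (?ratio ` {0..<1})"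
    using star_ratio_le assms(2) by (intro bdd_aboveI2[of _ _ "1 + real (n - 1)"]) auto
  with \<open>0 \<le> x\<close> \<open>x < 1\<close> have "?ratio x \<le> (SUP x\<in>{0..<1}. ?ratio x)" by (intro cSUP_upper) auto
  then show "1 + real (card {2..n}) * ((x + 1) / 2) powr p
      \<le> (SUP x\<in>{0..<1}. ?ratio x) * (1 + real (card {2..n}) * x powr p)"
    by (simp add: divide_le_eq add_pos_nonneg)
qed (use assms in auto)

lemma star_maximal_fun_power_sum_le:
  assumes "star_bound {2..n} p C" "1 \<le> n"
  shows "(\<Sum>v\<in>star_V n. \<bar>maximal_fun (star_V n) (star_E n) f v\<bar> powr p)
    \<le> C * (\<Sum>v\<in>star_V n. \<bar>f v\<bar> powr p)"
  using star_bound.star_maximal_power_sum_le[OF assms(1), of "\<bar>f 1\<bar>" "\<lambda>i. \<bar>f i\<bar>"]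
  by (simp add: star_maximal_power_sum_eq[OF assms(2)] sum_star_V[OF assms(2)])

lemma star_ratio_attained:
  assumes "1 \<le> n" "0 \<le> x" "x \<le> 1"
  shows "\<exists>f. (\<exists>v\<in>star_V n. f v \<noteq> 0) \<and>
    (\<Sum>v\<in>star_V n. \<bar>maximal_fun (star_V n) (star_E n) f v\<bar> powr p)
      = (1 + real (n - 1) * ((x + 1) / 2) powr p) / (1 + real (n - 1) * x powr p)
        * (\<Sum>v\<in>star_V n. \<bar>f v\<bar> powr p)"
proof -
  define f where "f i = (if i = 1 then 1 else x)" for i :: nat
  have "(\<Sum>v\<in>star_V n. \<bar>maximal_fun (star_V n) (star_E n) f v\<bar> powr p)
      = star_maximal_power_sum {2..n} p 1 (\<lambda>i. \<bar>f i\<bar>)"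
    unfolding star_maximal_power_sum_eq[OF assms(1)] by (simp add: f_def)
  also have "\<dots> = 1 + real (n - 1) * ((x + 1) / 2) powr p"
    using assms(2,3) by (subst star_maximal_power_sum_constant_leaves[where x = x]) (auto simp: f_def)
  moreover have "(\<Sum>v\<in>star_V n. \<bar>f v\<bar> powr p) = 1 + real (n - 1) * x powr p"
    using assms(2) by (simp add: sum_star_V[OF assms(1)] f_def)
  moreover have "0 < 1 + real (n - 1) * x powr p" by (intro add_pos_nonneg) auto
  moreover have "1 \<in> star_V n" "f 1 \<noteq> 0" using assms(1) by (simp_all add: star_V_def f_def)
  ultimately show ?thesis by (intro exI[of _ f]) auto
qed

theorem theorem2p4:
  fixes n :: nat and p :: real
  assumes "n \<ge> 3" and "1 < p" and "p \<le> 2"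
  shows "maximal_op_norm (star_V n) (star_E n) p =
    (SUP x \<in> {0..<1::real}. (1 + real (n - 1) * ((x + 1) / 2) powr p) / (1 + real (n - 1) * x powr p))
      powr (1 / p)"
proof -
  define ratio where "ratio x = (1 + real (n - 1) * ((x + 1) / 2) powr p) / (1 + real (n - 1) * x powr p)"
    for x :: real
  define C where "C = (SUP x\<in>{0..<1}. ratio x)"
  have "1 \<le> n" using assms(1) by simp
  have "star_bound {2..n} p C" unfolding C_def ratio_def using assms by (rule star_bound_Sup_ratio)
  then have "maximal_op_norm (star_V n) (star_E n) p = C powr (1 / p)"
    using assms star_ratio_attained[OF \<open>1 \<le> n\<close>]
    by (intro maximal_op_norm_eqI[where X = "{0..<1}" and g = ratio] star_maximal_fun_power_sum_le)
      (auto simp: ratio_def C_def star_V_def)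
  then show ?thesis by (simp add: C_def ratio_def)
qed

end
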